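(* Let $\mu$ be a positive Borel measure on $\mathbb{R}$, absolutely continuous with respect to Lebesgue measure, with finite moments of all orders, supported on a set $E$ with infinitely many points, let $c\in\mathbb{R}\setminus E$ and $N>0$. With the notation of the context, for every $n\ge1$, $$Q_n^{c,N}(x)=Q_n^c(x)-N\,Q_n^{c,N}(c)\,K_{n-1}^c(x,c),\qquad Q_n^{c,N}(c)=\frac{Q_n^c(c)}{1+NK_{n-1}^c(c,c)}=\kappa_n^{-1}Q_n^c(c),$$ where $\kappa_n=1+NB_n^c$.
   Context: $\{P_n\}$ is the monic orthogonal polynomial sequence (MOPS) for $\mu$, $\|f\|_\mu^2=\int f^2d\mu$. $\{Q_n^c\}$ is the MOPS for $\langle f,g\rangle_\nu=\int fg\frac{1}{x-c}d\mu$, $\|f\|_\nu^2=\langle f,f\rangle_\nu$, and $K_n^c(x,y)=\sum_{k=0}^n\frac{Q_k^c(x)Q_k^c(y)}{\|Q_k^c\|_\nu^2}$. $\{Q_n^{c,N}\}$ is the MOPS for $\langle f,g\rangle_{\nu_N}=\int fg\frac{1}{x-c}d\mu+Nf(c)g(c)$. $B_n^c=\frac{-Q_n^c(c)P_{n-1}(c)}{\|P_{n-1}\|_\mu^2}$. *)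

theory Defs
  imports "HOL-Analysis.Analysis" "HOL-Computational_Algebra.Polynomial"
begin

definition msupport :: "real measure \<Rightarrow> real set" where
  "msupport M = {x. \<forall>e>0. emeasure M (ball x e) > 0}"

definition ip_mu :: "real measure \<Rightarrow> real poly \<Rightarrow> real poly \<Rightarrow> real" where
  "ip_mu M f g = (\<integral>x. poly f x * poly g x \<partial>M)"

definition ip_nu :: "real measure \<Rightarrow> real \<Rightarrow> real poly \<Rightarrow> real poly \<Rightarrow> real" where
  "ip_nu M c f g = (\<integral>x. poly f x * poly g x / (x - c) \<partial>M)"

definition ip_nuN :: "real measure \<Rightarrow> real \<Rightarrow> real \<Rightarrow> real poly \<Rightarrow> real poly \<Rightarrow> real" where
  "ip_nuN M c N f g = ip_nu M c f g + N * poly f c * poly g c"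

definition is_MOPS :: "(real poly \<Rightarrow> real poly \<Rightarrow> real) \<Rightarrow> (nat \<Rightarrow> real poly) \<Rightarrow> bool" where
  "is_MOPS B Q \<longleftrightarrow>
     (\<forall>n. degree (Q n) = n \<and> lead_coeff (Q n) = 1 \<and> B (Q n) (Q n) \<noteq> 0) \<and>
     (\<forall>m n. m \<noteq> n \<longrightarrow> B (Q m) (Q n) = 0)"

definition kernelK :: "real measure \<Rightarrow> real \<Rightarrow> (nat \<Rightarrow> real poly) \<Rightarrow> nat \<Rightarrow> real \<Rightarrow> real \<Rightarrow> real" where
  "kernelK M c Q n x y = (\<Sum>k\<le>n. poly (Q k) x * poly (Q k) y / ip_nu M c (Q k) (Q k))"

definition Bc :: "real measure \<Rightarrow> real \<Rightarrow> (nat \<Rightarrow> real poly) \<Rightarrow> (nat \<Rightarrow> real poly) \<Rightarrow> nat \<Rightarrow> real" where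
  "Bc M c P Q n = - poly (Q n) c * poly (P (n - 1)) c / ip_mu M (P (n - 1)) (P (n - 1))"

end

theory Submission
  imports Defs
begin

text \<open>
  Both Q_n^{c,N} and Q_n^c are monic of degree n, so their difference lies in the span of
  Q_0^c, ..., Q_{n-1}^c. Its nu-Fourier coefficients are read off from the nu_N-orthogonality of
  Q_n^{c,N} to lower degrees: only the point mass contributes, and the expansion collapses to
  -N Q_n^{c,N}(c) K_{n-1}^c(., c). Evaluating at c gives the second identity; here
  1 + N K_{n-1}^c(c,c) \<noteq> 0, since otherwise K_{n-1}^c(., c) would be nu_N-orthogonal to every
  polynomial of degree < n, itself included.
  For the third identity, <f,g>_mu = <(x - c) f, g>_nu, so the mu-Fourier coefficients of
  K_{n-1}^c(., c) are <(x - c) P_k, K_{n-1}^c(., c)>_nu. By the reproducing property these vanish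
  for k < n - 1 and equal -Q_n^c(c) for k = n - 1, whence K_{n-1}^c(c,c) = B_n^c.
\<close>

lemma degree_diff_le_pred:
  fixes p q :: "'a::ring poly"
  assumes "degree p \<le> Suc m" "degree q \<le> Suc m" "coeff p (Suc m) = coeff q (Suc m)"
  shows "degree (p - q) \<le> m"
proof (rule degree_le, intro allI impI)
  fix i assume "m < i"
  then consider "i = Suc m" | "Suc m < i" by linarith
  then show "coeff (p - q) i = 0"
    by cases (use assms in \<open>simp_all add: coeff_eq_0\<close>)
qed

lemma
  assumes "is_MOPS B Q"
  shows MOPS_degree: "degree (Q n) = n"
    and MOPS_coeff_degree: "coeff (Q n) n = 1"
    and MOPS_norm_nonzero: "B (Q n) (Q n) \<noteq> 0"
    and MOPS_orthogonal: "m \<noteq> n \<Longrightarrow> B (Q m) (Q n) = 0"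
  using assms unfolding is_MOPS_def by metis+

lemma MOPS_zero: "is_MOPS B Q \<Longrightarrow> Q 0 = 1"
  by (metis MOPS_coeff_degree MOPS_degree degree_0_id one_pCons)

lemma degree_sub_MOPS_le:
  assumes "is_MOPS B Q" "degree p \<le> Suc m"
  shows "degree (p - smult (coeff p (Suc m)) (Q (Suc m))) \<le> m"
  using assms by (intro degree_diff_le_pred) (simp_all add: MOPS_degree MOPS_coeff_degree)

locale poly_sym_bilinear =
  fixes B :: "real poly \<Rightarrow> real poly \<Rightarrow> real"
  assumes sym: "B p q = B q p"
    and add_left: "B (p + q) r = B p r + B q r"
    and smult_left: "B (smult a p) r = a * B p r"
begin

lemma zero_left [simp]: "B 0 r = 0"
  using smult_left[of 0 0 r] by simp

lemma diff_left: "B (p - q) r = B p r - B q r"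
  using add_left[of "p - q" q r] by simp

lemma sum_left: "B (\<Sum>k\<in>A. f k) r = (\<Sum>k\<in>A. B (f k) r)"
  by (induction A rule: infinite_finite_induct) (simp_all add: add_left)

lemma MOPS_sum_left:
  assumes Q: "is_MOPS B Q" and "finite A"
  shows "B (\<Sum>k\<in>A. smult (a k) (Q k)) (Q j) = (if j \<in> A then a j * B (Q j) (Q j) else 0)"
proof -
  have "B (\<Sum>k\<in>A. smult (a k) (Q k)) (Q j) = (\<Sum>k\<in>A. if k = j then a j * B (Q j) (Q j) else 0)"
    unfolding sum_left smult_left by (intro sum.cong) (auto simp: MOPS_orthogonal[OF Q])
  then show ?thesis
    using \<open>finite A\<close> by (simp add: sum.delta)
qed

lemma MOPS_expansion:
  assumes Q: "is_MOPS B Q"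
  shows "degree p \<le> m \<Longrightarrow> p = (\<Sum>k\<le>m. smult (B p (Q k) / B (Q k) (Q k)) (Q k))"
proof (induction m arbitrary: p)
  case 0
  then have p: "p = smult (coeff p 0) (Q 0)"
    using MOPS_zero[OF Q] by (metis degree_0_id le_zero_eq smult_one)
  have "B p (Q 0) = coeff p 0 * B (Q 0) (Q 0)"
    by (subst p) (rule smult_left)
  then show ?case
    using MOPS_norm_nonzero[OF Q] by (simp flip: p)
next
  case (Suc m)
  define a where "a = coeff p (Suc m)"
  define r where "r = p - smult a (Q (Suc m))"
  have r_exp: "r = (\<Sum>k\<le>m. smult (B r (Q k) / B (Q k) (Q k)) (Q k))"
    using degree_sub_MOPS_le[OF Q Suc.prems] unfolding r_def a_def by (rule Suc.IH)
  have "B r (Q (Suc m)) = 0"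
    by (subst r_exp) (simp add: MOPS_sum_left[OF Q])
  then have B_p: "B p (Q k) = (if k = Suc m then a * B (Q k) (Q k) else B r (Q k))" for k
    unfolding r_def by (auto simp: diff_left smult_left MOPS_orthogonal[OF Q])
  have "(\<Sum>k\<le>Suc m. smult (B p (Q k) / B (Q k) (Q k)) (Q k))
        = (\<Sum>k\<le>m. smult (B r (Q k) / B (Q k) (Q k)) (Q k)) + smult a (Q (Suc m))"
    using MOPS_norm_nonzero[OF Q] by (simp add: B_p)
  also have "\<dots> = p"
    by (subst r_exp[symmetric]) (simp add: r_def)
  finally show ?case ..
qed

lemma MOPS_orthogonal_lower_degree:
  assumes Q: "is_MOPS B Q" and "degree p < n"
  shows "B p (Q n) = 0"
proof -
  have "degree p \<le> n - 1"
    using assms(2) by simp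
  from MOPS_expansion[OF Q this]
  have "B p (Q n) = B (\<Sum>k\<le>n - 1. smult (B p (Q k) / B (Q k) (Q k)) (Q k)) (Q n)"
    by simp
  also have "\<dots> = 0"
    using assms(2) by (simp add: MOPS_sum_left[OF Q])
  finally show ?thesis .
qed

definition kernel_poly :: "(nat \<Rightarrow> real poly) \<Rightarrow> nat \<Rightarrow> real \<Rightarrow> real poly" where
  "kernel_poly Q m y = (\<Sum>k\<le>m. smult (poly (Q k) y / B (Q k) (Q k)) (Q k))"

lemma degree_kernel_poly:
  assumes "is_MOPS B Q"
  shows "degree (kernel_poly Q m y) \<le> m"
  unfolding kernel_poly_def
  by (intro degree_sum_le) (auto intro: order.trans[OF degree_smult_le] simp: MOPS_degree[OF assms])

lemma kernel_poly_reproducing: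
  assumes Q: "is_MOPS B Q" and "degree q \<le> m"
  shows "B q (kernel_poly Q m y) = poly q y"
proof -
  have "B q (kernel_poly Q m y) = (\<Sum>k\<le>m. B q (Q k) / B (Q k) (Q k) * poly (Q k) y)"
    unfolding kernel_poly_def sym[of q] sum_left smult_left by (simp add: sym[of _ q] mult.commute)
  also have "\<dots> = poly (\<Sum>k\<le>m. smult (B q (Q k) / B (Q k) (Q k)) (Q k)) y"
    by (simp add: poly_sum)
  also have "\<dots> = poly q y"
    using MOPS_expansion[OF assms] by simp
  finally show ?thesis .
qed

lemma kernel_poly_reproducing_Suc:
  assumes Q: "is_MOPS B Q" and "degree p \<le> Suc m"
  shows "B p (kernel_poly Q m y) = poly p y - coeff p (Suc m) * poly (Q (Suc m)) y"
proof -
  define r where "r = p - smult (coeff p (Suc m)) (Q (Suc m))"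
  have "B (Q (Suc m)) (kernel_poly Q m y) = 0"
    using MOPS_orthogonal_lower_degree[OF Q] degree_kernel_poly[OF Q] sym
    by (metis le_imp_less_Suc)
  then have "B p (kernel_poly Q m y) = B r (kernel_poly Q m y)"
    by (simp add: r_def diff_left smult_left)
  also have "\<dots> = poly r y"
    using Q degree_sub_MOPS_le[OF assms] unfolding r_def by (rule kernel_poly_reproducing)
  finally show ?thesis
    by (simp add: r_def)
qed

lemma point_mass_sym_bilinear: "poly_sym_bilinear (\<lambda>p q. B p q + N * poly p y * poly q y)"
proof
  show "B p q + N * poly p y * poly q y = B q p + N * poly q y * poly p y" for p q
    by (simp add: sym[of p q])
qed (simp_all add: add_left smult_left algebra_simps)

lemma MOPS_point_mass:
  assumes Q: "is_MOPS B Q" and QN: "is_MOPS (\<lambda>p q. B p q + N * poly p y * poly q y) QN"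
  shows "QN (Suc m) = Q (Suc m) - smult (N * poly (QN (Suc m)) y) (kernel_poly Q m y)"
proof -
  interpret BN: poly_sym_bilinear "\<lambda>p q. B p q + N * poly p y * poly q y"
    by (rule point_mass_sym_bilinear)
  define a where "a = - N * poly (QN (Suc m)) y"
  define D where "D = QN (Suc m) - Q (Suc m)"
  have "degree D \<le> m"
    unfolding D_def using Q QN
    by (intro degree_diff_le_pred) (simp_all add: MOPS_degree MOPS_coeff_degree)
  have BD: "B D (Q k) = a * poly (Q k) y" if "k \<le> m" for k
  proof -
    have "B (Q (Suc m)) (Q k) = 0"
      using that by (simp add: MOPS_orthogonal[OF Q])
    moreover have "B (QN (Suc m)) (Q k) + N * poly (QN (Suc m)) y * poly (Q k) y = 0"
      using BN.MOPS_orthogonal_lower_degree[OF QN, of "Q k" "Suc m"] that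
      by (simp add: BN.sym[of "Q k"] MOPS_degree[OF Q])
    ultimately show ?thesis
      by (simp add: D_def diff_left a_def)
  qed
  have "D = (\<Sum>k\<le>m. smult (B D (Q k) / B (Q k) (Q k)) (Q k))"
    using Q \<open>degree D \<le> m\<close> by (rule MOPS_expansion)
  also have "\<dots> = smult a (kernel_poly Q m y)"
    by (rule poly_eqI) (simp add: kernel_poly_def coeff_sum sum_distrib_left BD mult.assoc)
  finally show ?thesis
    by (simp add: D_def a_def)
qed

lemma MOPS_point_mass_denominator_nonzero:
  assumes Q: "is_MOPS B Q" and QN: "is_MOPS (\<lambda>p q. B p q + N * poly p y * poly q y) QN"
  shows "1 + N * poly (kernel_poly Q m y) y \<noteq> 0"
proof
  interpret BN: poly_sym_bilinear "\<lambda>p q. B p q + N * poly p y * poly q y"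
    by (rule point_mass_sym_bilinear)
  define K where "K = kernel_poly Q m y"
  assume K_y: "1 + N * poly K y = 0"
  have BN_K: "B K (QN k) + N * poly K y * poly (QN k) y = 0" if "k \<le> m" for k
  proof -
    have "degree (QN k) \<le> m"
      using that by (simp add: MOPS_degree[OF QN])
    then have "B K (QN k) = poly (QN k) y"
      unfolding K_def sym[of _ "QN k"] using Q by (intro kernel_poly_reproducing)
    then have "B K (QN k) + N * poly K y * poly (QN k) y = poly (QN k) y * (1 + N * poly K y)"
      by (simp add: algebra_simps)
    then show ?thesis
      using K_y by simp
  qed
  have "K = (\<Sum>k\<le>m. smult ((B K (QN k) + N * poly K y * poly (QN k) y)
                              / (B (QN k) (QN k) + N * poly (QN k) y * poly (QN k) y)) (QN k))"
    using QN degree_kernel_poly[OF Q] unfolding K_def by (rule BN.MOPS_expansion)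
  also have "\<dots> = 0"
    by (simp add: BN_K)
  finally show False
    using K_y by simp
qed

lemma MOPS_point_mass_value:
  assumes Q: "is_MOPS B Q" and QN: "is_MOPS (\<lambda>p q. B p q + N * poly p y * poly q y) QN"
  shows "poly (QN (Suc m)) y = poly (Q (Suc m)) y / (1 + N * poly (kernel_poly Q m y) y)"
proof -
  have "poly (QN (Suc m)) y * (1 + N * poly (kernel_poly Q m y) y) = poly (Q (Suc m)) y"
    using arg_cong[OF MOPS_point_mass[OF Q QN, of m], of "\<lambda>p. poly p y"]
    by (simp add: algebra_simps)
  then show ?thesis
    using MOPS_point_mass_denominator_nonzero[OF Q QN] by (simp add: eq_divide_eq)
qed

lemma kernel_poly_diagonal_shift:
  assumes Q: "is_MOPS B Q" and A: "poly_sym_bilinear A" and P: "is_MOPS A P"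
    and A_B: "\<And>p q. A p q = B ([:-y, 1:] * p) q"
  shows "poly (kernel_poly Q m y) y = - poly (Q (Suc m)) y * poly (P m) y / A (P m) (P m)"
proof -
  interpret A: poly_sym_bilinear A
    by (rule A)
  define K where "K = kernel_poly Q m y"
  have A_K: "A K (P k) = (if k = m then - poly (Q (Suc m)) y else 0)" if "k \<le> m" for k
  proof -
    have deg: "degree ([:-y, 1:] * P k) \<le> Suc m"
      using that degree_mult_le[of "[:-y, 1:]" "P k"] by (simp add: MOPS_degree[OF P])
    have "coeff ([:-y, 1:] * P k) (Suc m) = coeff (P k) m"
      using that by (simp add: coeff_eq_0 MOPS_degree[OF P])
    also have "\<dots> = (if k = m then 1 else 0)"
      using that by (auto simp: coeff_eq_0 MOPS_degree[OF P] MOPS_coeff_degree[OF P])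
    finally have "coeff ([:-y, 1:] * P k) (Suc m) = (if k = m then 1 else 0)" .
    moreover have "A K (P k) = B ([:-y, 1:] * P k) K"
      using A.sym A_B by metis
    ultimately show ?thesis
      using kernel_poly_reproducing_Suc[OF Q deg, of y] unfolding K_def by simp
  qed
  have "K = (\<Sum>k\<le>m. smult (A K (P k) / A (P k) (P k)) (P k))"
    using P degree_kernel_poly[OF Q] unfolding K_def by (rule A.MOPS_expansion)
  from arg_cong[OF this, of "\<lambda>p. poly p y"]
  have "poly K y = (\<Sum>k\<le>m. A K (P k) / A (P k) (P k) * poly (P k) y)"
    by (simp add: poly_sum)
  also have "\<dots> = (\<Sum>k\<le>m. if k = m then - poly (Q (Suc m)) y * poly (P m) y / A (P m) (P m) else 0)"
    by (rule sum.cong) (simp_all add: A_K)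
  also have "\<dots> = - poly (Q (Suc m)) y * poly (P m) y / A (P m) (P m)"
    by simp
  finally show ?thesis
    unfolding K_def .
qed

end

lemma borel_measurable_poly [measurable]: "(\<lambda>x::real. poly p x) \<in> borel_measurable borel"
  by (intro borel_measurable_continuous_onI continuous_intros)

lemma integrable_poly:
  fixes M :: "real measure"
  assumes moments: "\<And>k::nat. integrable M (\<lambda>x. x ^ k)"
  shows "integrable M (\<lambda>x. poly p x)"
proof -
  have "integrable M (\<lambda>x. \<Sum>i\<le>degree p. coeff p i * x ^ i)"
    using moments by simp
  then show ?thesis
    by (simp add: poly_altdef)
qed

lemma AE_bounded_away_if_notin_msupport:
  assumes sets_M: "sets M = sets borel" and c_out: "c \<notin> msupport M"
  obtains e where "e > 0" "AE x in M. e \<le> \<bar>x - c\<bar>"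
proof -
  obtain e where e: "e > 0" "emeasure M (ball c e) = 0"
    using c_out unfolding msupport_def by (auto simp: not_less)
  have "ball c e \<in> null_sets M"
    using sets_M by (intro null_setsI[OF e(2)]) simp
  then have "AE x in M. x \<notin> ball c e"
    by (rule AE_not_in)
  then have "AE x in M. e \<le> \<bar>x - c\<bar>"
    by eventually_elim (simp add: dist_real_def)
  with e(1) that show ?thesis
    by blast
qed

lemma integrable_poly_div_outside_msupport:
  assumes sets_M: "sets M = sets borel" and moments: "\<And>k::nat. integrable M (\<lambda>x. x ^ k)"
    and c_out: "c \<notin> msupport M"
  shows "integrable M (\<lambda>x. poly p x / (x - c))"
proof -
  obtain e where e: "e > 0" "AE x in M. e \<le> \<bar>x - c\<bar>"
    using AE_bounded_away_if_notin_msupport[OF sets_M c_out] by blast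
  show ?thesis
  proof (rule Bochner_Integration.integrable_bound)
    show "integrable M (\<lambda>x. poly p x / e)"
      using integrable_poly[OF moments] by simp
    show "(\<lambda>x. poly p x / (x - c)) \<in> borel_measurable M"
      unfolding measurable_cong_sets[OF sets_M refl] by measurable
    show "AE x in M. norm (poly p x / (x - c)) \<le> norm (poly p x / e)"
      using e(2) by eventually_elim (use e(1) in \<open>simp add: abs_divide divide_left_mono\<close>)
  qed
qed

lemma poly_sym_bilinear_ip_mu:
  assumes moments: "\<And>k::nat. integrable M (\<lambda>x. x ^ k)"
  shows "poly_sym_bilinear (ip_mu M)"
proof
  have int: "integrable M (\<lambda>x. poly p x * poly q x)" for p q
    using integrable_poly[OF moments, of "p * q"] by simp
  show "ip_mu M (p + q) r = ip_mu M p r + ip_mu M q r" for p q r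
    unfolding ip_mu_def by (simp add: distrib_right int)
  show "ip_mu M (smult a p) r = a * ip_mu M p r" for a p r
    unfolding ip_mu_def by (simp add: mult.assoc flip: integral_mult_right_zero)
qed (simp add: ip_mu_def mult.commute)

lemma poly_sym_bilinear_ip_nu:
  assumes sets_M: "sets M = sets borel" and moments: "\<And>k::nat. integrable M (\<lambda>x. x ^ k)"
    and c_out: "c \<notin> msupport M"
  shows "poly_sym_bilinear (ip_nu M c)"
proof
  have int: "integrable M (\<lambda>x. poly p x * poly q x / (x - c))" for p q
    using integrable_poly_div_outside_msupport[OF assms, of "p * q"] by simp
  show "ip_nu M c (p + q) r = ip_nu M c p r + ip_nu M c q r" for p q r
    unfolding ip_nu_def by (simp add: distrib_right add_divide_distrib int)
  show "ip_nu M c (smult a p) r = a * ip_nu M c p r" for a p r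
    unfolding ip_nu_def by (simp add: mult.assoc flip: integral_mult_right_zero)
qed (simp add: ip_nu_def mult.commute)

lemma ip_mu_eq_ip_nu_shift:
  assumes sets_M: "sets M = sets borel" and c_out: "c \<notin> msupport M"
  shows "ip_mu M p q = ip_nu M c ([:-c, 1:] * p) q"
proof -
  obtain e where e: "e > 0" "AE x in M. e \<le> \<bar>x - c\<bar>"
    using AE_bounded_away_if_notin_msupport[OF sets_M c_out] by blast
  show ?thesis
    unfolding ip_mu_def ip_nu_def
  proof (rule integral_cong_AE)
    show "(\<lambda>x. poly p x * poly q x) \<in> borel_measurable M"
      "(\<lambda>x. poly ([:-c, 1:] * p) x * poly q x / (x - c)) \<in> borel_measurable M"
      unfolding measurable_cong_sets[OF sets_M refl] by measurable
    show "AE x in M. poly p x * poly q x = poly ([:-c, 1:] * p) x * poly q x / (x - c)"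
      using e(2) by eventually_elim (use e(1) in \<open>auto simp: field_simps\<close>)
  qed
qed

theorem lemma1:
  fixes M :: "real measure" and c N :: real
    and P Q QN :: "nat \<Rightarrow> real poly" and n :: nat
  assumes sets_M: "sets M = sets borel"
    and ac: "absolutely_continuous lborel M"
    and moments: "\<And>k::nat. integrable M (\<lambda>x. x ^ k)"
    and inf_supp: "infinite (msupport M)"
    and c_out: "c \<notin> msupport M"
    and N_pos: "N > 0"
    and P_MOPS: "is_MOPS (ip_mu M) P"
    and Q_MOPS: "is_MOPS (ip_nu M c) Q"
    and QN_MOPS: "is_MOPS (ip_nuN M c N) QN"
    and n_ge: "n \<ge> 1"
  shows "(\<forall>x. poly (QN n) x = poly (Q n) x - N * poly (QN n) c * kernelK M c Q (n - 1) x c)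
       \<and> poly (QN n) c = poly (Q n) c / (1 + N * kernelK M c Q (n - 1) c c)
       \<and> poly (QN n) c = inverse (1 + N * Bc M c P Q n) * poly (Q n) c"
proof -
  obtain m where n: "n = Suc m"
    using n_ge by (cases n) auto
  interpret nu: poly_sym_bilinear "ip_nu M c"
    using sets_M moments c_out by (rule poly_sym_bilinear_ip_nu)
  have QN: "is_MOPS (\<lambda>p q. ip_nu M c p q + N * poly p c * poly q c) QN"
    using QN_MOPS by (simp add: ip_nuN_def[abs_def])
  have K: "kernelK M c Q (n - 1) x c = poly (nu.kernel_poly Q m c) x" for x
    unfolding kernelK_def nu.kernel_poly_def n by (simp add: poly_sum mult.commute)
  have perturbation: "QN n = Q n - smult (N * poly (QN n) c) (nu.kernel_poly Q m c)"
    using nu.MOPS_point_mass[OF Q_MOPS QN] n by simp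
  have QN_at_c: "poly (QN n) c = poly (Q n) c / (1 + N * poly (nu.kernel_poly Q m c) c)"
    using nu.MOPS_point_mass_value[OF Q_MOPS QN] n by simp
  have pole: "poly (nu.kernel_poly Q m c) c = Bc M c P Q n"
    using nu.kernel_poly_diagonal_shift[OF Q_MOPS poly_sym_bilinear_ip_mu[OF moments] P_MOPS
        ip_mu_eq_ip_nu_shift[OF sets_M c_out]]
    unfolding Bc_def n by simp
  have "poly (QN n) x = poly (Q n) x - N * poly (QN n) c * kernelK M c Q (n - 1) x c" for x
    unfolding K by (subst perturbation) simp
  moreover have "poly (QN n) c = poly (Q n) c / (1 + N * kernelK M c Q (n - 1) c c)"
    unfolding K by (rule QN_at_c)
  moreover have "poly (QN n) c = inverse (1 + N * Bc M c P Q n) * poly (Q n) c"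
    unfolding QN_at_c pole by (rule divide_inverse_commute)
  ultimately show ?thesis
    by blast
qed

end
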